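(* Let $0\le t_o<t_f$ be real numbers, let $p:[t_o,t_f)\to\mathbb{R}$ and $q:[t_o,t_f)\to\mathbb{R}_{\ge0}$ be signals such that $q(t)=0\implies p(t)=0$ for every $t\in[t_o,t_f)$, and let $r(\tau)=\alpha\tau$ ($\tau>0$) with $\alpha\in\mathbb{R}$ (so $\dot r(0)=\alpha$). For $t_o\le t_0<t_1\le t_f$ with $\int_{t_0}^{t_1}q(t)\,dt>0$ define $\psi(t_0,t_1)=\dfrac{\int_{t_0}^{t_1}p(t)\,dt+r(t_1-t_0)}{\int_{t_0}^{t_1}q(t)\,dt}$. Let $\Psi=\{(t_0,t_1):t_o\le t_0<t_1\le t_f\}$, $\Psi_q=\{(t_0,t_1)\in\Psi:q(t)=0\ \forall t\in[t_0,t_1)\}$ and $\tilde\Psi_q=\{t\in[t_o,t_f):q(t)=0\}$. Then: (i) if $r(\tau)\le0$ for all $\tau>0$, $$\max_{(t_0,t_1)\in\Psi\setminus\Psi_q}\psi(t_0,t_1)=\max_{t\in[t_o,t_f)\setminus\tilde\Psi_q}\lim_{\Delta\to0}\psi(t,t+\Delta);$$ (ii) if $r(\tau)\ge0$ for all $\tau>0$, $$\min_{(t_0,t_1)\in\Psi\setminus\Psi_q}\psi(t_0,t_1)=\min_{t\in[t_o,t_f)\setminus\tilde\Psi_q}\lim_{\Delta\to0}\psi(t,t+\Delta);$$ where $\lim_{\Delta\to0}\psi(t,t+\Delta)=\dfrac{p(t)+\dot r(0)}{q(t)}$.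
   Context: This is the fractional function $\frac{\int p+r}{\int q+s}$ with the linear map $s$ in the denominator identically zero; $r$ is a continuous linear map $\mathbb{R}_{>0}\to\mathbb{R}$. *)

theory Defs
  imports "HOL-Analysis.Analysis"
begin

definition psi :: "(real \<Rightarrow> real) \<Rightarrow> (real \<Rightarrow> real) \<Rightarrow> (real \<Rightarrow> real) \<Rightarrow> real \<Rightarrow> real \<Rightarrow> real" where
  "psi p q r t0 t1 = (integral {t0..t1} p + r (t1 - t0)) / integral {t0..t1} q"

definition Psi_set :: "real \<Rightarrow> real \<Rightarrow> (real \<times> real) set" where
  "Psi_set to tf = {(t0, t1). to \<le> t0 \<and> t0 < t1 \<and> t1 \<le> tf}"

definition Psi_q :: "(real \<Rightarrow> real) \<Rightarrow> real \<Rightarrow> real \<Rightarrow> (real \<times> real) set" where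
  "Psi_q q to tf = {(t0, t1) \<in> Psi_set to tf. \<forall>t\<in>{t0..<t1}. q t = 0}"

definition Psi_q_tilde :: "(real \<Rightarrow> real) \<Rightarrow> real \<Rightarrow> real \<Rightarrow> real set" where
  "Psi_q_tilde q to tf = {t \<in> {to..<tf}. q t = 0}"

end

theory Submission
  imports Defs
begin

text \<open>For the maximum it suffices to show that \<open>\<psi>\<close> and the pointwise ratio have the same real
  upper bounds. If \<open>M\<close> bounds \<open>(p t + \<alpha>) / q t\<close> from above, then \<open>p + \<alpha> \<le> M q\<close> holds on every
  window \<open>[t\<^sub>0, t\<^sub>1)\<close>, also at zeros of \<open>q\<close> because there \<open>p = 0\<close> and \<open>\<alpha> \<le> 0\<close>; integrating gives
  \<open>\<psi>(t\<^sub>0, t\<^sub>1) \<le> M\<close>. Conversely, by continuity the pointwise ratio is the limit of \<open>\<psi>(t, t + \<Delta>)\<close>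
  as the window shrinks, so every bound of \<open>\<psi>\<close> bounds the ratio. The minimum case is the maximum
  case for \<open>-p\<close> and \<open>-\<alpha>\<close>.\<close>

lemma tendsto_integral_average_at_right:
  fixes f :: "real \<Rightarrow> real"
  assumes "continuous_on {a..<b} f" "t \<in> {a..<b}"
  shows "((\<lambda>\<Delta>. integral {t..t + \<Delta>} f / \<Delta>) \<longlongrightarrow> f t) (at_right 0)"
proof -
  define c where "c = (t + b) / 2"
  have "t < c" "continuous_on {t..c} f"
    using assms by (auto simp: c_def intro: continuous_on_subset)
  then have "((\<lambda>x. integral {t..x} f) has_real_derivative f t) (at t within {t..c})"
    by (simp add: integral_has_real_derivative)
  then have "((\<lambda>x. integral {t..x} f / (x - t)) \<longlongrightarrow> f t) (at_right t)"
    using \<open>t < c\<close> by (simp add: has_field_derivative_iff at_within_Icc_at_right)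
  then show ?thesis
    by (subst (asm) filterlim_at_right_to_0) (simp add: add.commute)
qed

lemma integral_pos_if_pos_at:
  fixes q :: "real \<Rightarrow> real"
  assumes "continuous_on {a..<b} q" "q integrable_on {a..b}"
    and "\<And>t. t \<in> {a<..<b} \<Longrightarrow> 0 \<le> q t"
    and "s \<in> {a..<b}" "0 < q s"
  shows "0 < integral {a..b} q"
proof -
  have "\<forall>\<^sub>F \<Delta> in at_right 0. 0 < integral {s..s + \<Delta>} q / \<Delta>"
    using order_tendstoD(1)[OF tendsto_integral_average_at_right[OF assms(1,4)] assms(5)] .
  then obtain c where "c > 0" and c: "\<And>\<Delta>. 0 < \<Delta> \<Longrightarrow> \<Delta> < c \<Longrightarrow> 0 < integral {s..s + \<Delta>} q / \<Delta>"
    by (auto simp: eventually_at_right_field)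
  define \<Delta> where "\<Delta> = min (c / 2) ((b - s) / 2)"
  have "0 < \<Delta>" "\<Delta> < c" "s + \<Delta> < b"
    using \<open>c > 0\<close> assms(4) by (auto simp: \<Delta>_def min_def field_simps)
  then have "0 < integral {s..s + \<Delta>} q"
    using c by (simp add: zero_less_divide_iff)
  also have "\<dots> = integral {s<..<s + \<Delta>} q"
    by (rule integral_open_interval_real)
  also have "\<dots> \<le> integral {a<..<b} q"
  proof (rule integral_subset_le)
    show "{s<..<s + \<Delta>} \<subseteq> {a<..<b}"
      using assms(4) \<open>s + \<Delta> < b\<close> by auto
    show "q integrable_on {s<..<s + \<Delta>}"
      using integrable_on_subinterval[OF assms(2), of s "s + \<Delta>"] assms(4) \<open>s + \<Delta> < b\<close>
      by (simp add: integrable_on_Icc_iff_Ioo)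
    show "q integrable_on {a<..<b}"
      using assms(2) by (simp add: integrable_on_Icc_iff_Ioo)
  qed (use assms(3) in auto)
  also have "\<dots> = integral {a..b} q"
    by (rule integral_open_interval_real[symmetric])
  finally show ?thesis .
qed

lemma psi_le_if_pointwise_le:
  fixes p q :: "real \<Rightarrow> real"
  assumes "p integrable_on {t0..t1}" "q integrable_on {t0..t1}" "t0 \<le> t1"
    and "0 < integral {t0..t1} q"
    and "\<And>t. t \<in> {t0<..<t1} \<Longrightarrow> p t + \<alpha> \<le> M * q t"
  shows "psi p q (\<lambda>\<tau>. \<alpha> * \<tau>) t0 t1 \<le> M"
proof -
  have "integral {t0..t1} p + \<alpha> * (t1 - t0) = integral {t0..t1} (\<lambda>t. p t + \<alpha>)"
    using assms(1,3) by (simp add: integral_add integrable_const_ivl)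
  also have "\<dots> \<le> integral {t0..t1} (\<lambda>t. M * q t)"
  proof -
    have "(\<lambda>t. p t + \<alpha>) integrable_on {t0..t1}" "(\<lambda>t. M * q t) integrable_on {t0..t1}"
      using integrable_add[OF assms(1) integrable_const_ivl] integrable_on_mult_right[OF assms(2)]
      by simp_all
    then have "(\<lambda>t. p t + \<alpha>) integrable_on {t0<..<t1}" "(\<lambda>t. M * q t) integrable_on {t0<..<t1}"
      by (simp_all add: integrable_on_Icc_iff_Ioo[symmetric])
    then show ?thesis
      unfolding integral_open_interval_real using assms(5) by (rule integral_le)
  qed
  also have "\<dots> = M * integral {t0..t1} q"
    by simp
  finally show ?thesis
    using assms(4) by (simp add: psi_def pos_divide_le_eq)
qed

lemma psi_tendsto_at_right:
  fixes p q :: "real \<Rightarrow> real"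
  assumes "continuous_on {a..<b} p" "continuous_on {a..<b} q" "t \<in> {a..<b}" "q t \<noteq> 0"
  shows "((\<lambda>\<Delta>. psi p q (\<lambda>\<tau>. \<alpha> * \<tau>) t (t + \<Delta>)) \<longlongrightarrow> (p t + \<alpha>) / q t) (at_right 0)"
proof -
  have "((\<lambda>\<Delta>. (integral {t..t + \<Delta>} p / \<Delta> + \<alpha>) / (integral {t..t + \<Delta>} q / \<Delta>))
          \<longlongrightarrow> (p t + \<alpha>) / q t) (at_right 0)"
    using assms by (intro tendsto_intros tendsto_integral_average_at_right)
  moreover have "\<forall>\<^sub>F \<Delta> in at_right 0.
      (integral {t..t + \<Delta>} p / \<Delta> + \<alpha>) / (integral {t..t + \<Delta>} q / \<Delta>) = psi p q (\<lambda>\<tau>. \<alpha> * \<tau>) t (t + \<Delta>)"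
    using eventually_at_right_less[of "0::real"]
  proof eventually_elim
    case (elim \<Delta>)
    then show ?case
      by (cases "integral {t..t + \<Delta>} q = 0") (auto simp: psi_def field_simps)
  qed
  ultimately show ?thesis
    by (rule Lim_transform_eventually)
qed

lemma SUP_ereal_eq_if_same_upper_bounds:
  fixes f :: "'a \<Rightarrow> real" and g :: "'b \<Rightarrow> real"
  assumes "\<And>M. (\<forall>x\<in>A. f x \<le> M) \<longleftrightarrow> (\<forall>y\<in>B. g y \<le> M)"
  shows "(SUP x\<in>A. ereal (f x)) = (SUP y\<in>B. ereal (g y))"
proof (rule antisym; rule ereal_le_real)
  fix M
  assume "(SUP y\<in>B. ereal (g y)) \<le> ereal M"
  then show "(SUP x\<in>A. ereal (f x)) \<le> ereal M"
    using assms[of M] by (simp add: SUP_le_iff)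
next
  fix M
  assume "(SUP x\<in>A. ereal (f x)) \<le> ereal M"
  then show "(SUP y\<in>B. ereal (g y)) \<le> ereal M"
    using assms[of M] by (simp add: SUP_le_iff)
qed

lemma INF_ereal_eq_uminus_SUP:
  fixes f :: "'a \<Rightarrow> real"
  shows "(INF x\<in>S. ereal (f x)) = - (SUP x\<in>S. ereal (- f x))"
  using ereal_SUP_uminus_eq[of "\<lambda>x. ereal (f x)" S] by simp

lemma ratio_le_if_psi_le:
  fixes p q :: "real \<Rightarrow> real"
  assumes "continuous_on {a..<b} p" "continuous_on {a..<b} q" "t \<in> {a..<b}" "q t \<noteq> 0"
    and "\<And>\<Delta>. 0 < \<Delta> \<Longrightarrow> \<Delta> < b - t \<Longrightarrow> psi p q (\<lambda>\<tau>. \<alpha> * \<tau>) t (t + \<Delta>) \<le> M"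
  shows "(p t + \<alpha>) / q t \<le> M"
proof (rule tendsto_upperbound)
  show "((\<lambda>\<Delta>. psi p q (\<lambda>\<tau>. \<alpha> * \<tau>) t (t + \<Delta>)) \<longlongrightarrow> (p t + \<alpha>) / q t) (at_right 0)"
    using assms(1-4) by (rule psi_tendsto_at_right)
  have "b - t > 0"
    using assms(3) by simp
  then show "\<forall>\<^sub>F \<Delta> in at_right 0. psi p q (\<lambda>\<tau>. \<alpha> * \<tau>) t (t + \<Delta>) \<le> M"
    unfolding eventually_at_right_field using assms(5) by blast
qed simp

lemma psi_le_if_ratio_le:
  fixes p q :: "real \<Rightarrow> real"
  assumes "continuous_on {a..<b} q" "p integrable_on {a..b}" "q integrable_on {a..b}"
    and "\<And>t. t \<in> {a..<b} \<Longrightarrow> 0 \<le> q t" "\<And>t. t \<in> {a..<b} \<Longrightarrow> q t = 0 \<Longrightarrow> p t = 0"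
    and "\<alpha> \<le> 0" "\<And>t. t \<in> {a..<b} \<Longrightarrow> q t \<noteq> 0 \<Longrightarrow> (p t + \<alpha>) / q t \<le> M"
    and "s \<in> {a..<b}" "q s \<noteq> 0"
  shows "psi p q (\<lambda>\<tau>. \<alpha> * \<tau>) a b \<le> M"
proof (rule psi_le_if_pointwise_le)
  have "0 < q s"
    using assms(4)[OF assms(8)] assms(9) by linarith
  then show "0 < integral {a..b} q"
    using assms(1,3,4,8) by (intro integral_pos_if_pos_at) auto
  show "p t + \<alpha> \<le> M * q t" if "t \<in> {a<..<b}" for t
  proof (cases "q t = 0")
    case True
    then show ?thesis
      using assms(5,6) that by simp
  next
    case False
    then have "0 < q t" "(p t + \<alpha>) / q t \<le> M"
      using assms(4,7) that by (simp_all add: order_less_le)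
    then show ?thesis
      by (simp add: pos_divide_le_eq mult.commute)
  qed
  show "a \<le> b"
    using assms(8) by simp
qed (use assms(2,3) in simp_all)

lemma mem_Psi_set_diff_Psi_q_iff:
  "(t0, t1) \<in> Psi_set to tf - Psi_q q to tf \<longleftrightarrow>
     to \<le> t0 \<and> t0 < t1 \<and> t1 \<le> tf \<and> (\<exists>s\<in>{t0..<t1}. q s \<noteq> 0)"
  by (auto simp: Psi_set_def Psi_q_def)

lemma SUP_psi_eq_SUP_ratio:
  fixes p q :: "real \<Rightarrow> real"
  assumes "continuous_on {to..<tf} p" "continuous_on {to..<tf} q"
    and "p integrable_on {to..tf}" "q integrable_on {to..tf}"
    and "\<forall>t\<in>{to..<tf}. q t \<ge> 0" "\<forall>t\<in>{to..<tf}. q t = 0 \<longrightarrow> p t = 0"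
    and "\<alpha> \<le> 0"
  shows "(SUP x\<in>Psi_set to tf - Psi_q q to tf. ereal (psi p q (\<lambda>\<tau>. \<alpha> * \<tau>) (fst x) (snd x)))
       = (SUP t\<in>{to..<tf} - Psi_q_tilde q to tf. ereal ((p t + \<alpha>) / q t))"
proof (rule SUP_ereal_eq_if_same_upper_bounds, intro iffI ballI)
  fix M t
  assume M: "\<forall>x\<in>Psi_set to tf - Psi_q q to tf. psi p q (\<lambda>\<tau>. \<alpha> * \<tau>) (fst x) (snd x) \<le> M"
    and "t \<in> {to..<tf} - Psi_q_tilde q to tf"
  then have t: "t \<in> {to..<tf}" and "q t \<noteq> 0"
    by (simp_all add: Psi_q_tilde_def)
  have "psi p q (\<lambda>\<tau>. \<alpha> * \<tau>) t (t + \<Delta>) \<le> M" if "0 < \<Delta>" "\<Delta> < tf - t" for \<Delta>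
  proof -
    have "(t, t + \<Delta>) \<in> Psi_set to tf - Psi_q q to tf"
      using t \<open>q t \<noteq> 0\<close> that unfolding mem_Psi_set_diff_Psi_q_iff by force
    then show ?thesis
      using M by (metis fst_conv snd_conv)
  qed
  then show "(p t + \<alpha>) / q t \<le> M"
    by (rule ratio_le_if_psi_le[OF assms(1,2) t \<open>q t \<noteq> 0\<close>])
next
  fix M x
  assume M: "\<forall>t\<in>{to..<tf} - Psi_q_tilde q to tf. (p t + \<alpha>) / q t \<le> M"
    and x: "x \<in> Psi_set to tf - Psi_q q to tf"
  obtain t0 t1 where x_eq: "x = (t0, t1)"
    by fastforce
  obtain s where window: "to \<le> t0" "t0 < t1" "t1 \<le> tf" and s: "s \<in> {t0..<t1}" "q s \<noteq> 0"
    using x unfolding x_eq mem_Psi_set_diff_Psi_q_iff by blast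
  then have sub: "{t0..<t1} \<subseteq> {to..<tf}" "{t0..t1} \<subseteq> {to..tf}"
    by auto
  show "psi p q (\<lambda>\<tau>. \<alpha> * \<tau>) (fst x) (snd x) \<le> M"
    unfolding x_eq fst_conv snd_conv
  proof (rule psi_le_if_ratio_le[where s = s])
    show "continuous_on {t0..<t1} q"
      using assms(2) sub(1) by (rule continuous_on_subset)
    show "p integrable_on {t0..t1}" "q integrable_on {t0..t1}"
      using assms(3,4) sub(2) by (simp_all add: integrable_on_subinterval)
    show "(p t + \<alpha>) / q t \<le> M" if "t \<in> {t0..<t1}" "q t \<noteq> 0" for t
      using M that sub(1) by (auto simp: Psi_q_tilde_def)
  qed (use assms(5-7) sub(1) s in auto)
qed

lemma psi_uminus:
  "psi (\<lambda>t. - p t) q (\<lambda>\<tau>. - \<alpha> * \<tau>) t0 t1 = - psi p q (\<lambda>\<tau>. \<alpha> * \<tau>) t0 t1"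
  by (simp add: psi_def flip: divide_minus_left)

lemma INF_psi_eq_INF_ratio:
  fixes p q :: "real \<Rightarrow> real"
  assumes "continuous_on {to..<tf} p" "continuous_on {to..<tf} q"
    and "p integrable_on {to..tf}" "q integrable_on {to..tf}"
    and "\<forall>t\<in>{to..<tf}. q t \<ge> 0" "\<forall>t\<in>{to..<tf}. q t = 0 \<longrightarrow> p t = 0"
    and "0 \<le> \<alpha>"
  shows "(INF x\<in>Psi_set to tf - Psi_q q to tf. ereal (psi p q (\<lambda>\<tau>. \<alpha> * \<tau>) (fst x) (snd x)))
       = (INF t\<in>{to..<tf} - Psi_q_tilde q to tf. ereal ((p t + \<alpha>) / q t))"
proof -
  let ?A = "Psi_set to tf - Psi_q q to tf" and ?B = "{to..<tf} - Psi_q_tilde q to tf"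
  have "(INF x\<in>?A. ereal (psi p q (\<lambda>\<tau>. \<alpha> * \<tau>) (fst x) (snd x)))
      = - (SUP x\<in>?A. ereal (psi (\<lambda>t. - p t) q (\<lambda>\<tau>. - \<alpha> * \<tau>) (fst x) (snd x)))"
    unfolding INF_ereal_eq_uminus_SUP psi_uminus[symmetric] ..
  also have "\<dots> = - (SUP t\<in>?B. ereal ((- p t + - \<alpha>) / q t))"
  proof (rule arg_cong[where f = uminus], rule SUP_psi_eq_SUP_ratio)
    show "continuous_on {to..<tf} (\<lambda>t. - p t)"
      using assms(1) by (rule continuous_on_minus)
    show "(\<lambda>t. - p t) integrable_on {to..tf}"
      using assms(3) by (rule integrable_neg)
  qed (use assms(2,4-7) in auto)
  also have "\<dots> = (INF t\<in>?B. ereal ((p t + \<alpha>) / q t))"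
    unfolding INF_ereal_eq_uminus_SUP by (simp flip: divide_minus_left)
  finally show ?thesis .
qed

theorem corollary1:
  fixes p q r :: "real \<Rightarrow> real" and to tf \<alpha> :: real
  assumes "0 \<le> to" and "to < tf"
    and "continuous_on {to..<tf} p" and "continuous_on {to..<tf} q"
    and "p integrable_on {to..tf}" and "q integrable_on {to..tf}"
    and "\<forall>t\<in>{to..<tf}. q t \<ge> 0"
    and "\<forall>t\<in>{to..<tf}. q t = 0 \<longrightarrow> p t = 0"
    and "r = (\<lambda>\<tau>. \<alpha> * \<tau>)"
  shows "(\<forall>t\<in>{to..<tf} - Psi_q_tilde q to tf.
            ((\<lambda>\<Delta>. psi p q r t (t + \<Delta>)) \<longlongrightarrow> (p t + \<alpha>) / q t) (at_right 0))
       \<and> ((\<forall>\<tau>>0. r \<tau> \<le> 0) \<longrightarrow>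
            (SUP x\<in>Psi_set to tf - Psi_q q to tf. ereal (psi p q r (fst x) (snd x)))
          = (SUP t\<in>{to..<tf} - Psi_q_tilde q to tf. ereal ((p t + \<alpha>) / q t)))
       \<and> ((\<forall>\<tau>>0. r \<tau> \<ge> 0) \<longrightarrow>
            (INF x\<in>Psi_set to tf - Psi_q q to tf. ereal (psi p q r (fst x) (snd x)))
          = (INF t\<in>{to..<tf} - Psi_q_tilde q to tf. ereal ((p t + \<alpha>) / q t)))"
proof (intro conjI ballI impI)
  fix t assume "t \<in> {to..<tf} - Psi_q_tilde q to tf"
  then show "((\<lambda>\<Delta>. psi p q r t (t + \<Delta>)) \<longlongrightarrow> (p t + \<alpha>) / q t) (at_right 0)"
    using psi_tendsto_at_right[OF assms(3,4)] assms(9) by (simp add: Psi_q_tilde_def)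
next
  assume "\<forall>\<tau>>0. r \<tau> \<le> 0"
  then have "\<alpha> \<le> 0"
    using assms(9) by (metis mult.right_neutral zero_less_one)
  then show "(SUP x\<in>Psi_set to tf - Psi_q q to tf. ereal (psi p q r (fst x) (snd x)))
          = (SUP t\<in>{to..<tf} - Psi_q_tilde q to tf. ereal ((p t + \<alpha>) / q t))"
    unfolding assms(9) by (rule SUP_psi_eq_SUP_ratio[OF assms(3-8)])
next
  assume "\<forall>\<tau>>0. r \<tau> \<ge> 0"
  then have "0 \<le> \<alpha>"
    using assms(9) by (metis mult.right_neutral zero_less_one)
  then show "(INF x\<in>Psi_set to tf - Psi_q q to tf. ereal (psi p q r (fst x) (snd x)))
          = (INF t\<in>{to..<tf} - Psi_q_tilde q to tf. ereal ((p t + \<alpha>) / q t))"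
    unfolding assms(9) by (rule INF_psi_eq_INF_ratio[OF assms(3-8)])
qed

end
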